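(* Let $F = x_0^a(x_1^b+\cdots+x_n^b)\in k[x_0,\ldots,x_n]$ with $a\ge1$, $a+1 \leq b$ and $n \geq3$. If $\mathbb X\subset\mathbb{P}^n$ is a finite set of distinct points apolar to $F$, then $|\mathbb X \setminus \{X_i=0\}| \geq b$ for all $i=1,\ldots,n$.
   Context: $k$ is algebraically closed of characteristic zero, $T=k[X_0,\ldots,X_n]$ acts on $S=k[x_0,\ldots,x_n]$ by differentiation ($X_i\circ F=\partial F/\partial x_i$), and $F^\perp=\{g\in T:g\circ F=0\}$. A finite set $\mathbb{X}$ of points of $\mathbb{P}^n$ (with coordinates $X_0,\ldots,X_n$) is apolar to $F$ if its homogeneous ideal $I_{\mathbb{X}}\subseteq T$ satisfies $I_{\mathbb{X}}\subseteq F^\perp$. $\{X_i=0\}$ denotes the coordinate hyperplane. *)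

theory Defs
  imports "HOL-Computational_Algebra.Polynomial"
begin

text \<open>Multivariate polynomials in the variables with indices 0..n, represented
  explicitly as coefficient functions on exponent vectors (monomials)
  \<open>nat \<Rightarrow> nat\<close>, with finite support and no exponents beyond index n.
  The same representation is used for S = k[x_0..x_n] and T = k[X_0..X_n].\<close>

type_synonym monom = "nat \<Rightarrow> nat"
type_synonym 'a mpoly = "monom \<Rightarrow> 'a"

definition supp :: "'a::zero mpoly \<Rightarrow> monom set" where
  "supp g = {\<alpha>. g \<alpha> \<noteq> 0}"

definition polys :: "nat \<Rightarrow> 'a::zero mpoly set" where
  "polys n = {g. finite (supp g) \<and> (\<forall>\<alpha>\<in>supp g. \<forall>i>n. \<alpha> i = 0)}"

definition mdeg :: "nat \<Rightarrow> monom \<Rightarrow> nat" where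
  "mdeg n \<alpha> = (\<Sum>i\<le>n. \<alpha> i)"

definition hcomp :: "nat \<Rightarrow> nat \<Rightarrow> 'a::zero mpoly \<Rightarrow> 'a mpoly" where
  "hcomp n d g = (\<lambda>\<alpha>. if mdeg n \<alpha> = d then g \<alpha> else 0)"

definition eval :: "nat \<Rightarrow> 'a::comm_semiring_1 mpoly \<Rightarrow> (nat \<Rightarrow> 'a) \<Rightarrow> 'a" where
  "eval n g p = (\<Sum>\<alpha>\<in>supp g. g \<alpha> * (\<Prod>i\<le>n. p i ^ \<alpha> i))"

text \<open>Apolarity action (differentiation) g \<circ> F, X_i acting as \<partial>/\<partial>x_i:
  X^\<alpha> \<circ> x^(\<alpha>+\<gamma>) = (\<Prod>i (\<alpha>_i+\<gamma>_i)!/\<gamma>_i!) x^\<gamma>, extended bilinearly.\<close>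
definition act :: "nat \<Rightarrow> 'a::comm_semiring_1 mpoly \<Rightarrow> 'a mpoly \<Rightarrow> 'a mpoly" where
  "act n g F = (\<lambda>\<gamma>. \<Sum>\<alpha>\<in>supp g. g \<alpha> * F (\<lambda>i. \<alpha> i + \<gamma> i) *
      of_nat (\<Prod>i\<le>n. fact (\<alpha> i + \<gamma> i) div fact (\<gamma> i)))"

definition perp :: "nat \<Rightarrow> 'a::comm_semiring_1 mpoly \<Rightarrow> 'a mpoly set" where
  "perp n F = {g \<in> polys n. act n g F = (\<lambda>_. 0)}"

text \<open>Points of P^n are given by representatives p (coordinates p 0 .. p n, p i = 0
  for i > n, p nonzero).\<close>
definition proj_rep :: "nat \<Rightarrow> (nat \<Rightarrow> 'a::zero) \<Rightarrow> bool" where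
  "proj_rep n p \<longleftrightarrow> (\<exists>i\<le>n. p i \<noteq> 0) \<and> (\<forall>i>n. p i = 0)"

definition distinct_proj_points :: "nat \<Rightarrow> (nat \<Rightarrow> 'a::field) set \<Rightarrow> bool" where
  "distinct_proj_points n X \<longleftrightarrow> finite X \<and> (\<forall>p\<in>X. proj_rep n p) \<and>
     (\<forall>p\<in>X. \<forall>q\<in>X. p \<noteq> q \<longrightarrow> \<not> (\<exists>c. q = (\<lambda>i. c * p i)))"

definition ideal_of_points :: "nat \<Rightarrow> (nat \<Rightarrow> 'a::field) set \<Rightarrow> 'a mpoly set" where
  "ideal_of_points n X = {g \<in> polys n. \<forall>d. \<forall>p\<in>X. eval n (hcomp n d g) p = 0}"

definition apolar :: "nat \<Rightarrow> (nat \<Rightarrow> 'a::field) set \<Rightarrow> 'a mpoly \<Rightarrow> bool" where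
  "apolar n X F \<longleftrightarrow> ideal_of_points n X \<subseteq> perp n F"

definition Fform :: "nat \<Rightarrow> nat \<Rightarrow> nat \<Rightarrow> 'a::zero_neq_one mpoly" where
  "Fform n a b = (\<lambda>\<alpha>. if \<exists>i\<in>{1..n}. \<alpha> = (\<lambda>j. if j = 0 then a else if j = i then b else 0)
                      then 1 else 0)"

end

theory Submission
  imports Defs
begin

text \<open>Suppose fewer than \<open>b\<close> points of \<open>X\<close> lie off \<open>{X_i = 0}\<close>, and let \<open>Z\<close> be those
  of them having some other nonzero coordinate; the only further candidate is the coordinate
  point of \<open>X_i\<close>. For each \<open>q \<in> Z\<close> pick a linear form vanishing at \<open>q\<close> with nonzero
  \<open>X_i\<close>-coefficient. Their product times \<open>X_0 X_i\<close> is a form vanishing on \<open>X\<close>, hence lies in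
  \<open>F\<^sup>\<perp>\<close>; it contains \<open>X_0 X_i^K\<close>, \<open>K = |Z| + 1 \<le> b\<close>, and all its monomials are divisible
  by \<open>X_0 X_i\<close>. Applied to \<open>F\<close>, only \<open>X_0 X_i^K\<close> contributes to the coefficient of
  \<open>x_0^(a-1) x_i^(b-K)\<close>, which is therefore nonzero, a contradiction.\<close>

definition var_mult :: "nat \<Rightarrow> 'a::zero mpoly \<Rightarrow> 'a mpoly" where
  "var_mult j h = (\<lambda>\<alpha>. if 0 < \<alpha> j then h (\<alpha>(j := \<alpha> j - 1)) else 0)"

definition lin_mult :: "nat \<Rightarrow> (nat \<Rightarrow> 'a::comm_semiring_1) \<Rightarrow> 'a mpoly \<Rightarrow> 'a mpoly" where
  "lin_mult n c h = (\<lambda>\<alpha>. \<Sum>j\<le>n. c j * var_mult j h \<alpha>)"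

abbreviation inc_var :: "monom \<Rightarrow> nat \<Rightarrow> monom" where
  "inc_var \<beta> j \<equiv> \<beta>(j := Suc (\<beta> j))"

lemma supp_var_mult: "supp (var_mult j h) = (\<lambda>\<beta>. inc_var \<beta> j) ` supp h"
proof (intro equalityI subsetI)
  fix \<alpha> assume "\<alpha> \<in> supp (var_mult j h)"
  then have "0 < \<alpha> j" "\<alpha>(j := \<alpha> j - 1) \<in> supp h"
    by (auto simp: supp_def var_mult_def split: if_splits)
  moreover have "\<alpha> = inc_var (\<alpha>(j := \<alpha> j - 1)) j"
    using \<open>0 < \<alpha> j\<close> by auto
  ultimately show "\<alpha> \<in> (\<lambda>\<beta>. inc_var \<beta> j) ` supp h" by blast
qed (auto simp: supp_def var_mult_def)

lemma supp_lin_mult: "supp (lin_mult n c h) \<subseteq> (\<Union>j\<le>n. supp (var_mult j h))"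
proof
  fix \<alpha> assume "\<alpha> \<in> supp (lin_mult n c h)"
  then obtain j where "j \<le> n" "c j * var_mult j h \<alpha> \<noteq> 0"
    unfolding supp_def lin_mult_def by (auto elim: sum.not_neutral_contains_not_neutral)
  then show "\<alpha> \<in> (\<Union>j\<le>n. supp (var_mult j h))" by (force simp: supp_def)
qed

lemma lin_mult_monom_cases:
  assumes "\<alpha> \<in> supp (lin_mult n c h)"
  obtains j \<beta> where "j \<le> n" "\<beta> \<in> supp h" "\<alpha> = inc_var \<beta> j"
  using assms supp_lin_mult[of n c h] by (auto simp: supp_var_mult)

lemma lin_mult_polys: "h \<in> polys n \<Longrightarrow> lin_mult n c h \<in> polys n"
proof -
  assume h: "h \<in> polys n"
  then have "finite (supp (lin_mult n c h))"
    by (intro finite_subset[OF supp_lin_mult]) (auto simp: polys_def supp_var_mult)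
  moreover have "\<alpha> k = 0" if "\<alpha> \<in> supp (lin_mult n c h)" "n < k" for \<alpha> k
    using that(1) by (rule lin_mult_monom_cases) (use h that(2) in \<open>auto simp: polys_def\<close>)
  ultimately show ?thesis by (auto simp: polys_def)
qed

lemma mdeg_inc_var: "j \<le> n \<Longrightarrow> mdeg n (inc_var \<beta> j) = Suc (mdeg n \<beta>)"
  by (simp add: mdeg_def sum.delta_remove[of _ j] sum.remove[of _ j])

lemma lin_mult_homogeneous:
  "\<forall>\<beta>\<in>supp h. mdeg n \<beta> = d \<Longrightarrow> \<forall>\<alpha>\<in>supp (lin_mult n c h). mdeg n \<alpha> = Suc d"
  by (metis lin_mult_monom_cases mdeg_inc_var)

lemma lin_mult_exponent_pos:
  "\<forall>\<beta>\<in>supp h. 0 < \<beta> k \<Longrightarrow> \<forall>\<alpha>\<in>supp (lin_mult n c h). 0 < \<alpha> k"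
  by (metis lin_mult_monom_cases fun_upd_apply zero_less_Suc)

lemma eval_superset:
  assumes "finite A" "supp g \<subseteq> A"
  shows "eval n g p = (\<Sum>\<alpha>\<in>A. g \<alpha> * (\<Prod>i\<le>n. p i ^ \<alpha> i))"
  unfolding eval_def
  by (rule sum.mono_neutral_left) (use assms in \<open>auto simp: supp_def\<close>)

lemma eval_lincomb:
  fixes g :: "nat \<Rightarrow> 'a::comm_semiring_1 mpoly"
  assumes "finite J" "\<And>j. j \<in> J \<Longrightarrow> finite (supp (g j))"
  shows "eval n (\<lambda>\<alpha>. \<Sum>j\<in>J. c j * g j \<alpha>) p = (\<Sum>j\<in>J. c j * eval n (g j) p)"
proof -
  define A where "A = (\<Union>j\<in>J. supp (g j))"
  define mono where "mono \<alpha> = (\<Prod>i\<le>n. p i ^ \<alpha> i)" for \<alpha>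
  have A: "finite A" using assms by (simp add: A_def)
  have "supp (\<lambda>\<alpha>. \<Sum>j\<in>J. c j * g j \<alpha>) \<subseteq> A"
    by (force simp: A_def supp_def elim: sum.not_neutral_contains_not_neutral)
  then have "eval n (\<lambda>\<alpha>. \<Sum>j\<in>J. c j * g j \<alpha>) p = (\<Sum>\<alpha>\<in>A. \<Sum>j\<in>J. c j * (g j \<alpha> * mono \<alpha>))"
    by (simp add: eval_superset[OF A] mono_def sum_distrib_right mult.assoc)
  also have "\<dots> = (\<Sum>j\<in>J. c j * (\<Sum>\<alpha>\<in>A. g j \<alpha> * mono \<alpha>))"
    by (simp add: sum.swap[of _ A] sum_distrib_left)
  also have "\<dots> = (\<Sum>j\<in>J. c j * eval n (g j) p)"
  proof (intro sum.cong refl)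
    fix j assume "j \<in> J"
    then have "eval n (g j) p = (\<Sum>\<alpha>\<in>A. g j \<alpha> * mono \<alpha>)"
      unfolding mono_def by (intro eval_superset[OF A]) (auto simp: A_def)
    then show "c j * (\<Sum>\<alpha>\<in>A. g j \<alpha> * mono \<alpha>) = c j * eval n (g j) p" by simp
  qed
  finally show ?thesis .
qed

lemma monom_eval_inc_var:
  fixes p :: "nat \<Rightarrow> 'a::comm_semiring_1"
  assumes "j \<le> n"
  shows "(\<Prod>i\<le>n. p i ^ inc_var \<beta> j i) = p j * (\<Prod>i\<le>n. p i ^ \<beta> i)"
proof -
  have "(\<Prod>i\<le>n. p i ^ inc_var \<beta> j i) = (\<Prod>i\<le>n. (if i = j then p i else 1) * p i ^ \<beta> i)"
    by (rule prod.cong) auto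
  then show ?thesis using assms by (simp add: prod.distrib prod.delta)
qed

lemma eval_var_mult:
  assumes "j \<le> n" "finite (supp h)"
  shows "eval n (var_mult j h) p = p j * eval n h p"
proof -
  have "inj_on (\<lambda>\<beta>. inc_var \<beta> j) (supp h)"
    by (rule inj_onI) (metis fun_upd_same fun_upd_upd diff_Suc_1 fun_upd_triv)
  then have "eval n (var_mult j h) p
      = (\<Sum>\<beta>\<in>supp h. var_mult j h (inc_var \<beta> j) * (\<Prod>i\<le>n. p i ^ inc_var \<beta> j i))"
    by (simp add: eval_def supp_var_mult sum.reindex)
  also have "\<dots> = (\<Sum>\<beta>\<in>supp h. p j * (h \<beta> * (\<Prod>i\<le>n. p i ^ \<beta> i)))"
    by (intro sum.cong refl) (simp add: var_mult_def monom_eval_inc_var[OF assms(1), simplified] algebra_simps)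
  finally show ?thesis by (simp add: eval_def sum_distrib_left)
qed

lemma eval_lin_mult:
  assumes "finite (supp h)"
  shows "eval n (lin_mult n c h) p = (\<Sum>j\<le>n. c j * p j) * eval n h p"
proof -
  have "eval n (lin_mult n c h) p = (\<Sum>j\<le>n. c j * eval n (var_mult j h) p)"
    unfolding lin_mult_def using assms by (intro eval_lincomb) (auto simp: supp_var_mult)
  then show ?thesis using assms by (simp add: eval_var_mult sum_distrib_right mult.assoc)
qed

definition monom_x0_xi :: "nat \<Rightarrow> nat \<Rightarrow> monom" where
  "monom_x0_xi i k = (\<lambda>j. if j = 0 then 1 else if j = i then k else 0)"

lemma mdeg_monom_x0_xi: "0 < i \<Longrightarrow> i \<le> n \<Longrightarrow> mdeg n (monom_x0_xi i k) = Suc k"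
  by (simp add: mdeg_def monom_x0_xi_def sum.If_cases Int_absorb2)

lemma lin_mult_coeff_monom_x0_xi:
  assumes "0 < i" "i \<le> n" "\<forall>\<beta>\<in>supp h. 0 < \<beta> 0"
  shows "lin_mult n c h (monom_x0_xi i (Suc k)) = c i * h (monom_x0_xi i k)"
proof -
  have "var_mult j h (monom_x0_xi i (Suc k)) = (if j = i then h (monom_x0_xi i k) else 0)" for j
  proof -
    have "h ((monom_x0_xi i (Suc k))(0 := 0)) = 0"
      using assms(3) by (auto simp: supp_def)
    moreover have "(monom_x0_xi i (Suc k))(i := k) = monom_x0_xi i k"
      using assms(1) by (auto simp: monom_x0_xi_def)
    ultimately show ?thesis
      using assms(1) by (auto simp: var_mult_def monom_x0_xi_def)
  qed
  then have "c j * var_mult j h (monom_x0_xi i (Suc k)) = (if j = i then c i * h (monom_x0_xi i k) else 0)"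
    for j by simp
  then show ?thesis using assms(2) by (simp add: lin_mult_def)
qed

lemma eval_monom_x0_xi_1:
  fixes p :: "nat \<Rightarrow> 'a::comm_semiring_1"
  assumes "0 < i" "i \<le> n"
  shows "(\<Prod>j\<le>n. p j ^ monom_x0_xi i 1 j) = p 0 * p i"
proof -
  have "(\<Prod>j\<le>n. p j ^ monom_x0_xi i 1 j) = (\<Prod>j\<le>n. (if j = 0 then p j else 1) * (if j = i then p j else 1))"
    by (rule prod.cong) (use assms(1) in \<open>auto simp: monom_x0_xi_def\<close>)
  then show ?thesis using assms(2) by (simp add: prod.distrib prod.delta)
qed

lemma exists_linear_form_vanishing:
  fixes q :: "nat \<Rightarrow> 'a::comm_ring_1"
  assumes "i \<le> n" "l \<le> n" "l \<noteq> i" "q l \<noteq> 0"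
  obtains c where "(\<Sum>j\<le>n. c j * q j) = 0" "c i \<noteq> 0"
proof
  define c where "c j = (if j = l then q i else 0) - (if j = i then q l else 0)" for j
  have "(\<Sum>j\<le>n. c j * q j) = (\<Sum>j\<le>n. if j = l then q i * q l else 0) - (\<Sum>j\<le>n. if j = i then q l * q i else 0)"
    by (simp add: c_def left_diff_distrib sum_subtractf if_distrib[of "\<lambda>x. x * _"] cong: if_cong)
  then show "(\<Sum>j\<le>n. c j * q j) = 0" using assms(1,2) by (simp add: mult.commute)
  show "c i \<noteq> 0" using assms(3,4) by (simp add: c_def)
qed

lemma exists_form_vanishing_on_points:
  fixes P :: "(nat \<Rightarrow> 'a::field) set"
  assumes "0 < i" "i \<le> n" "finite P" "\<forall>q\<in>P. \<exists>l\<le>n. l \<noteq> i \<and> q l \<noteq> 0"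
  obtains g :: "'a mpoly"
  where "g \<in> polys n" "\<forall>\<alpha>\<in>supp g. mdeg n \<alpha> = card P + 2"
    "\<forall>\<alpha>\<in>supp g. 0 < \<alpha> 0 \<and> 0 < \<alpha> i" "g (monom_x0_xi i (card P + 1)) \<noteq> 0"
    "\<forall>p. p 0 * p i = 0 \<or> p \<in> P \<longrightarrow> eval n g p = 0"
proof -
  have "\<exists>g :: 'a mpoly. g \<in> polys n \<and> (\<forall>\<alpha>\<in>supp g. mdeg n \<alpha> = card P + 2)
    \<and> (\<forall>\<alpha>\<in>supp g. 0 < \<alpha> 0 \<and> 0 < \<alpha> i) \<and> g (monom_x0_xi i (card P + 1)) \<noteq> 0
    \<and> (\<forall>p. p 0 * p i = 0 \<or> p \<in> P \<longrightarrow> eval n g p = 0)"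
    using assms(3,4)
  proof (induction P rule: finite_induct)
    case empty
    define g :: "'a mpoly" where "g \<alpha> = (if \<alpha> = monom_x0_xi i 1 then 1 else 0)" for \<alpha>
    have supp: "supp g = {monom_x0_xi i 1}" by (auto simp: g_def supp_def)
    have "g \<in> polys n" using assms(1,2) by (auto simp: polys_def supp monom_x0_xi_def)
    moreover have "\<forall>\<alpha>\<in>supp g. mdeg n \<alpha> = card {} + 2 \<and> 0 < \<alpha> 0 \<and> 0 < \<alpha> i"
      using assms(1,2) by (simp add: supp mdeg_monom_x0_xi) (simp add: monom_x0_xi_def)
    moreover have "eval n g p = p 0 * p i" for p
      using eval_monom_x0_xi_1[OF assms(1,2)] by (simp add: eval_def supp g_def)
    moreover have "g (monom_x0_xi i (card {} + 1)) \<noteq> 0" by (simp add: g_def)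
    ultimately show ?case by (intro exI[of _ g]) auto
  next
    case (insert q P)
    then obtain g where g: "g \<in> polys n" "\<forall>\<alpha>\<in>supp g. mdeg n \<alpha> = card P + 2"
      "\<forall>\<alpha>\<in>supp g. 0 < \<alpha> 0 \<and> 0 < \<alpha> i" "g (monom_x0_xi i (card P + 1)) \<noteq> 0"
      "\<forall>p. p 0 * p i = 0 \<or> p \<in> P \<longrightarrow> eval n g p = 0"
      by auto
    obtain l where l: "l \<le> n" "l \<noteq> i" "q l \<noteq> 0" using insert.prems by auto
    obtain c where c: "(\<Sum>j\<le>n. c j * q j) = 0" "c i \<noteq> 0"
      using exists_linear_form_vanishing[of i n l q, OF assms(2) l] .
    have fin: "finite (supp g)" using g(1) by (simp add: polys_def)
    have "lin_mult n c g (monom_x0_xi i (card (insert q P) + 1)) = c i * g (monom_x0_xi i (card P + 1))"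
      using lin_mult_coeff_monom_x0_xi[OF assms(1,2), of g c "card P + 1"] g(3) insert.hyps by simp
    moreover have "eval n (lin_mult n c g) p = 0" if "p 0 * p i = 0 \<or> p \<in> insert q P" for p
      using that g(5) c(1) by (auto simp: eval_lin_mult[OF fin])
    moreover have "\<forall>\<alpha>\<in>supp (lin_mult n c g). 0 < \<alpha> 0 \<and> 0 < \<alpha> i"
      using lin_mult_exponent_pos[of g 0] lin_mult_exponent_pos[of g i] g(3) by blast
    ultimately show ?case
      using g(1) c(2) insert.hyps lin_mult_polys lin_mult_homogeneous[OF g(2)] g(4)
      by (intro exI[of _ "lin_mult n c g"]) simp
  qed
  then show ?thesis by (elim exE conjE) (rule that)
qed

lemma homogeneous_in_ideal_of_points:
  assumes "g \<in> polys n" "\<forall>\<alpha>\<in>supp g. mdeg n \<alpha> = d" "\<forall>p\<in>X. eval n g p = 0"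
  shows "g \<in> ideal_of_points n X"
proof -
  have "hcomp n e g = (if e = d then g else (\<lambda>_. 0))" for e
    using assms(2) by (auto simp: hcomp_def supp_def fun_eq_iff)
  then show ?thesis using assms(1,3) by (simp add: ideal_of_points_def eval_def supp_def)
qed

lemma act_Fform_ne_zero:
  fixes g :: "'a::field_char_0 mpoly"
  assumes "1 \<le> a" "i \<in> {1..n}" "K \<le> b" "finite (supp g)"
    and "\<forall>\<alpha>\<in>supp g. 0 < \<alpha> 0 \<and> 0 < \<alpha> i" "g (monom_x0_xi i K) \<noteq> 0"
  shows "act n g (Fform n a b) \<noteq> (\<lambda>_. 0)"
proof -
  define E :: "nat \<Rightarrow> monom" where "E l j = (if j = 0 then a else if j = l then b else 0)" for l j
  define \<gamma> :: monom where "\<gamma> j = (if j = 0 then a - 1 else if j = i then b - K else 0)" for j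
  have F: "Fform n a b \<delta> = (if \<exists>l\<in>{1..n}. \<delta> = E l then 1 else 0)" for \<delta>
    by (simp add: Fform_def E_def[abs_def])
  have shift_lead: "(\<lambda>j. monom_x0_xi i K j + \<gamma> j) = E i"
    using assms(1-3) by (auto simp: monom_x0_xi_def \<gamma>_def E_def)
  text \<open>Every monomial of \<open>g\<close> contains \<open>X_i\<close>, so shifting it by \<open>\<gamma>\<close> can only land on
    \<open>E i\<close>, which forces it to be \<open>X_0 X_i^K\<close>.\<close>
  have shift_other: "Fform n a b (\<lambda>j. \<alpha> j + \<gamma> j) = 0" if "\<alpha> \<in> supp g - {monom_x0_xi i K}" for \<alpha>
  proof (rule ccontr)
    assume "Fform n a b (\<lambda>j. \<alpha> j + \<gamma> j) \<noteq> 0"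
    then obtain l where "l \<in> {1..n}" and eq: "\<And>j. \<alpha> j + \<gamma> j = E l j"
      by (auto simp: F fun_eq_iff split: if_splits)
    have pos: "0 < \<alpha> 0" "0 < \<alpha> i" using assms(5) that by auto
    with eq[of i] assms(2) have "l = i" by (auto simp: E_def split: if_splits)
    have "\<alpha> j = monom_x0_xi i K j" for j
      using eq[of j] \<open>l = i\<close> assms(1-3) by (auto simp: monom_x0_xi_def \<gamma>_def E_def)
    then have "\<alpha> = monom_x0_xi i K" ..
    with that show False by simp
  qed
  define N :: nat where "N = (\<Prod>j\<le>n. fact (monom_x0_xi i K j + \<gamma> j) div fact (\<gamma> j))"
  have "N \<noteq> 0"
    unfolding N_def by (auto simp: fact_dvd dvd_div_eq_0_iff)
  have lead: "monom_x0_xi i K \<in> supp g" using assms(6) by (simp add: supp_def)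
  have "act n g (Fform n a b) \<gamma> = g (monom_x0_xi i K) * Fform n a b (E i) * of_nat N"
    unfolding act_def N_def
    by (subst sum.remove[OF assms(4) lead]) (simp add: shift_other shift_lead)
  also have "\<dots> \<noteq> 0"
    using assms(2,6) \<open>N \<noteq> 0\<close> by (auto simp: F)
  finally show ?thesis by (auto simp: fun_eq_iff)
qed

theorem lemma7p1:
  fixes X :: "(nat \<Rightarrow> 'a::{alg_closed_field, field_char_0}) set"
    and n a b :: nat
  assumes "a \<ge> 1" and "a + 1 \<le> b" and "n \<ge> 3"
    and "distinct_proj_points n X"
    and "apolar n X (Fform n a b)"
  shows "\<forall>i\<in>{1..n}. card {p \<in> X. p i \<noteq> 0} \<ge> b"
proof (intro ballI leI notI)
  fix i assume i: "i \<in> {1..n}" and few: "card {p \<in> X. p i \<noteq> 0} < b"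
  have "finite X" using assms(4) by (simp add: distinct_proj_points_def)
  define Z where "Z = {p \<in> X. p i \<noteq> 0 \<and> (\<exists>l\<le>n. l \<noteq> i \<and> p l \<noteq> 0)}"
  have Z_sub: "Z \<subseteq> {p \<in> X. p i \<noteq> 0}" by (auto simp: Z_def)
  have fin: "finite {p \<in> X. p i \<noteq> 0}" using \<open>finite X\<close> by simp
  have "finite Z" using finite_subset[OF Z_sub fin] .
  have "card Z < b" using card_mono[OF fin Z_sub] few by linarith
  have "0 < i" "i \<le> n" and Z_off_axis: "\<forall>q\<in>Z. \<exists>l\<le>n. l \<noteq> i \<and> q l \<noteq> 0"
    using i by (auto simp: Z_def)
  obtain g :: "'a mpoly" where g: "g \<in> polys n" "\<forall>\<alpha>\<in>supp g. mdeg n \<alpha> = card Z + 2"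
    "\<forall>\<alpha>\<in>supp g. 0 < \<alpha> 0 \<and> 0 < \<alpha> i" "g (monom_x0_xi i (card Z + 1)) \<noteq> 0"
    "\<forall>p. p 0 * p i = 0 \<or> p \<in> Z \<longrightarrow> eval n g p = 0"
    by (rule exists_form_vanishing_on_points[OF \<open>0 < i\<close> \<open>i \<le> n\<close> \<open>finite Z\<close> Z_off_axis])
  have "p 0 * p i = 0 \<or> p \<in> Z" if "p \<in> X" for p
    using that i by (auto simp: Z_def)
  then have "\<forall>p\<in>X. eval n g p = 0"
    using g(5) by blast
  then have "g \<in> perp n (Fform n a b)"
    using assms(5) homogeneous_in_ideal_of_points[OF g(1,2)] by (auto simp: apolar_def)
  moreover have "act n g (Fform n a b) \<noteq> (\<lambda>_. 0)"
    using act_Fform_ne_zero[OF assms(1) i _ _ g(3,4)] \<open>card Z < b\<close> g(1) by (simp add: polys_def)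
  ultimately show False by (simp add: perp_def)
qed

end
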